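(* Let $\mathbf{p}_G=(x_G,y_G,z_G)$ be such that $\sigma_{\mathbf{a}}(x_G,y_G)>0$ for every row of $\mathbf{A}_O$. For each row $[\mathbf{a}_O^\top\ \mathbf{a}^\top]$ define $$\alpha_{\mathbf{a}}=a_{Ox}+a_y z_G-a_z y_G,\qquad \beta_{\mathbf{a}}=a_{Oy}-a_x z_G+a_z x_G,$$ and let $\mathcal{P}=\{(\tilde x,\tilde y)\in\mathbb{R}^2:\ \frac{\alpha_{\mathbf{a}}}{\sigma_{\mathbf{a}}}\tilde x+\frac{\beta_{\mathbf{a}}}{\sigma_{\mathbf{a}}}\tilde y\le 1 \text{ for every row}\}$, where $\sigma_{\mathbf{a}}=\sigma_{\mathbf{a}}(x_G,y_G)$. Then for every $\mathbf{u}=(u_x,u_y,u_z)$ with $u_z>-g$, $$\mathbf{u}\in\mathcal{C}(\mathbf{p}_G)\iff \frac{1}{g+u_z}(u_x,u_y)\in\mathcal{P}.$$ Consequently $\mathcal{C}(\mathbf{p}_G)\cap\{u_z>-g\}=\{(0,0,-g)+\lambda(\tilde x,\tilde y,1):\ \lambda>0,\ (\tilde x,\tilde y)\in\mathcal{P}\}$, i.e. it is (the part above its apex of) an upward-pointing convex cone with apex $(0,0,-g)$ and rays $(\tilde x,\tilde y,1)$, $(\tilde x,\tilde y)\in\mathcal{P}$.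
   Context: Setting: a robot of mass $m>0$ in contact with its environment at $K$ contact points with coordinates $\mathbf{c}_1,\dots,\mathbf{c}_K\in\mathbb{R}^3$ (inertial frame with origin $O$, $z$-axis vertical upward). Admissible contact forces at contact $i$ form a polyhedral convex cone $\widetilde{\mathcal{C}}_i=\{\mathbf{f}_i:\mathbf{F}_i\mathbf{f}_i\le \mathbf{0}\}$. The contact wrench cone is $\mathrm{CWC}_O=\{(\sum_i \mathbf{f}_i,\ \sum_i \mathbf{c}_i\times\mathbf{f}_i):\ \mathbf{f}_i\in\widetilde{\mathcal{C}}_i\}\subseteq\mathbb{R}^6$; fix $\mathbf{A}_O$ (6 columns) with $\mathrm{CWC}_O=\{\mathbf{w}:\mathbf{A}_O\mathbf{w}\le\mathbf{0}\}$, each row written $[\mathbf{a}_O^\top\ \mathbf{a}^\top]$ with $\mathbf{a}_O=(a_{Ox},a_{Oy},a_{Oz})$, $\mathbf{a}=(a_x,a_y,a_z)$. Gravity is $\boldsymbol{\gamma}=(0,0,-g)$, $g>0$. For a row, the slackness is $\sigma_{\mathbf{a}}(x,y)=-a_{Oz}+a_y x-a_x y$. For a COM position $\mathbf{p}\in\mathbb{R}^3$, the set of feasible COM accelerations under zero rate of change of angular momentum is $\mathcal{C}(\mathbf{p})=\{\mathbf{u}\in\mathbb{R}^3:\ (m(\mathbf{u}-\boldsymbol{\gamma}),\ \mathbf{p}\times m(\mathbf{u}-\boldsymbol{\gamma}))\in\mathrm{CWC}_O\}$ (the contact wrench has force $m(\mathbf{u}-\boldsymbol{\gamma})$ and zero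 moment about the COM); it does not depend on $m>0$. *)

theory Defs
  imports "HOL-Analysis.Analysis"
begin

text \<open>Vectors of R^3 are real^3; components are v$1 (x), v$2 (y), v$3 (z).
A wrench is a pair (force, moment) in R^3 x R^3.\<close>

definition contact_cone :: "(real^3) list \<Rightarrow> (real^3) set" where
  "contact_cone Fi = {f. \<forall>r\<in>set Fi. r \<bullet> f \<le> 0}"

definition CWC :: "nat \<Rightarrow> (nat \<Rightarrow> real^3) \<Rightarrow> (nat \<Rightarrow> (real^3) list) \<Rightarrow> ((real^3) \<times> (real^3)) set" where
  "CWC K c F = {(\<Sum>i<K. f i, \<Sum>i<K. cross3 (c i) (f i)) | f. \<forall>i<K. f i \<in> contact_cone (F i)}"

definition hrep :: "((real^3) \<times> (real^3)) list \<Rightarrow> ((real^3) \<times> (real^3)) set" where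
  "hrep A = {(f, n). \<forall>(aO, a)\<in>set A. aO \<bullet> f + a \<bullet> n \<le> 0}"

definition gravity :: "real \<Rightarrow> real^3" where
  "gravity g = vector [0, 0, - g]"

definition slack :: "real^3 \<Rightarrow> real^3 \<Rightarrow> real \<Rightarrow> real \<Rightarrow> real" where
  "slack aO a x y = - aO$3 + a$2 * x - a$1 * y"

text \<open>Feasible COM accelerations at COM position p (zero rate of change of
angular momentum).\<close>
definition feasible_acc :: "((real^3) \<times> (real^3)) set \<Rightarrow> real \<Rightarrow> real \<Rightarrow> real^3 \<Rightarrow> (real^3) set" where
  "feasible_acc W m g p = {u. (m *\<^sub>R (u - gravity g), cross3 p (m *\<^sub>R (u - gravity g))) \<in> W}"

definition alpha_row :: "real^3 \<Rightarrow> real^3 \<Rightarrow> real^3 \<Rightarrow> real" where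
  "alpha_row aO a pG = aO$1 + a$2 * pG$3 - a$3 * pG$2"

definition beta_row :: "real^3 \<Rightarrow> real^3 \<Rightarrow> real^3 \<Rightarrow> real" where
  "beta_row aO a pG = aO$2 - a$1 * pG$3 + a$3 * pG$1"

definition polygonP :: "((real^3) \<times> (real^3)) list \<Rightarrow> real^3 \<Rightarrow> (real \<times> real) set" where
  "polygonP A pG = {(xt, yt). \<forall>(aO, a)\<in>set A.
     alpha_row aO a pG / slack aO a (pG$1) (pG$2) * xt
     + beta_row aO a pG / slack aO a (pG$1) (pG$2) * yt \<le> 1}"

end

theory Submission
  imports Defs
begin

text \<open>Each row of the half-space description of the contact wrench cone, evaluated on the
  gravito-inertial wrench of a COM acceleration u, is affine in u, and its coefficient of
  g + u_z is minus the slackness. Dividing by the positive quantity slack * (g + u_z) turns each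
  row into a half-plane constraint on the horizontal coordinates of the ray through the apex
  (0, 0, -g), and these constraints are exactly the rows of the polygon.\<close>

lemma gravity_nth [simp]: "gravity g $ 1 = 0" "gravity g $ 2 = 0" "gravity g $ 3 = - g"
  by (simp_all add: gravity_def)

lemma row_inner_com_wrench:
  fixes aO a p u :: "real^3"
  shows "aO \<bullet> (m *\<^sub>R (u - gravity g)) + a \<bullet> cross3 p (m *\<^sub>R (u - gravity g))
       = m * (alpha_row aO a p * u$1 + beta_row aO a p * u$2 - slack aO a (p$1) (p$2) * (g + u$3))"
  by (simp add: inner_vec_def sum_3 cross3_simps alpha_row_def beta_row_def slack_def
      algebra_simps)

lemma mem_feasible_acc_hrep_iff:
  assumes "m > 0"
  shows "u \<in> feasible_acc (hrep A) m g p \<longleftrightarrow>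
    (\<forall>(aO, a)\<in>set A. alpha_row aO a p * u$1 + beta_row aO a p * u$2
                      \<le> slack aO a (p$1) (p$2) * (g + u$3))"
  using assms
  by (simp del: inner_scaleR_right
      add: feasible_acc_def hrep_def row_inner_com_wrench split_beta mult_le_0_iff)

lemma affine_le_iff_scaled:
  fixes al be sg s x y :: real
  assumes "sg > 0" "s > 0"
  shows "al * x + be * y \<le> sg * s \<longleftrightarrow> al / sg * (x / s) + be / sg * (y / s) \<le> 1"
proof -
  have "al / sg * (x / s) + be / sg * (y / s) = (al * x + be * y) / (sg * s)"
    using assms by (simp add: field_simps)
  then show ?thesis
    using assms by (simp add: pos_divide_le_eq)
qed

lemma mem_feasible_acc_iff_polygonP:
  assumes "m > 0" and "u$3 > - g"
    and slack_pos: "\<forall>(aO, a)\<in>set A. slack aO a (p$1) (p$2) > 0"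
  shows "u \<in> feasible_acc (hrep A) m g p \<longleftrightarrow>
         (u$1 / (g + u$3), u$2 / (g + u$3)) \<in> polygonP A p"
proof -
  have "g + u$3 > 0"
    using assms(2) by simp
  then have row_iff: "alpha_row aO a p * u$1 + beta_row aO a p * u$2 \<le> slack aO a (p$1) (p$2) * (g + u$3)
      \<longleftrightarrow> alpha_row aO a p / slack aO a (p$1) (p$2) * (u$1 / (g + u$3))
          + beta_row aO a p / slack aO a (p$1) (p$2) * (u$2 / (g + u$3)) \<le> 1"
    if "(aO, a) \<in> set A" for aO a
    using affine_le_iff_scaled slack_pos that by fastforce
  show ?thesis
    unfolding mem_feasible_acc_hrep_iff[OF assms(1)] polygonP_def mem_Collect_eq case_prod_conv
    by (intro ball_cong refl) (auto simp only: row_iff split: prod.splits)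
qed

lemma eq_apex_plus_ray:
  fixes u :: "real^3"
  assumes "u$3 > - g"
  shows "u = gravity g + (g + u$3) *\<^sub>R vector [u$1 / (g + u$3), u$2 / (g + u$3), 1]"
  using assms by (simp add: vec_eq_iff forall_3 vector_3)

lemma apex_plus_ray_nth:
  "(gravity g + lam *\<^sub>R vector [xt, yt, 1]) $ 1 = lam * xt"
  "(gravity g + lam *\<^sub>R vector [xt, yt, 1]) $ 2 = lam * yt"
  "(gravity g + lam *\<^sub>R vector [xt, yt, 1]) $ 3 = lam - g"
  by (simp_all add: vector_3)

theorem mainTheorem3:
  fixes m g :: real and K :: nat and c :: "nat \<Rightarrow> real^3" and F :: "nat \<Rightarrow> (real^3) list"
    and A :: "((real^3) \<times> (real^3)) list" and pG :: "real^3"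
  assumes "m > 0" and "g > 0"
    and "CWC K c F = hrep A"
    and "\<forall>(aO, a)\<in>set A. slack aO a (pG$1) (pG$2) > 0"
  shows "(\<forall>u :: real^3. u$3 > - g \<longrightarrow>
            (u \<in> feasible_acc (CWC K c F) m g pG \<longleftrightarrow>
             (u$1 / (g + u$3), u$2 / (g + u$3)) \<in> polygonP A pG))
       \<and> feasible_acc (CWC K c F) m g pG \<inter> {u. u$3 > - g} =
           {gravity g + lam *\<^sub>R vector [xt, yt, 1] | lam xt yt. lam > 0 \<and> (xt, yt) \<in> polygonP A pG}"
proof -
  note polygon_iff = mem_feasible_acc_iff_polygonP[OF assms(1) _ assms(4), unfolded assms(3)[symmetric]]
  have "u \<in> feasible_acc (CWC K c F) m g pG \<inter> {u. u$3 > - g}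
      \<longleftrightarrow> (\<exists>lam xt yt. u = gravity g + lam *\<^sub>R vector [xt, yt, 1] \<and> lam > 0 \<and> (xt, yt) \<in> polygonP A pG)"
    for u :: "real^3"
  proof
    assume "u \<in> feasible_acc (CWC K c F) m g pG \<inter> {u. u$3 > - g}"
    then show "\<exists>lam xt yt. u = gravity g + lam *\<^sub>R vector [xt, yt, 1] \<and> lam > 0 \<and> (xt, yt) \<in> polygonP A pG"
      using eq_apex_plus_ray polygon_iff by fastforce
  next
    assume "\<exists>lam xt yt. u = gravity g + lam *\<^sub>R vector [xt, yt, 1] \<and> lam > 0 \<and> (xt, yt) \<in> polygonP A pG"
    then show "u \<in> feasible_acc (CWC K c F) m g pG \<inter> {u. u$3 > - g}"
      using polygon_iff by (auto simp: apex_plus_ray_nth)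
  qed
  then show ?thesis
    using polygon_iff by blast
qed

end
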